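(* Let $\mathcal{K}^\star_{loc}$, $\{k\}$ and $\mathcal{K}_{g,user}$ be pairwise disjoint finite sets of keyframes, with weighted undirected edges (weights $w_e\geq1$) among $\mathcal{K}^\star_{loc}\cup\{k\}$ and between $\mathcal{K}^\star_{loc}\cup\{k\}$ and $\mathcal{K}_{g,user}$, such that the graph on $\mathcal{K}^\star_{loc}\cup\{k\}$ is connected, and let $\mathcal{I}$ be a symmetric positive definite $6\times6$ matrix with $\det\mathcal{I}\geq1$. For $F\subseteq\mathcal{K}_{g,user}$ define $$g(F)=\log\det\big(\tilde{\mathcal{I}}_{loc}(\mathcal{K}^\star_{loc}\cup\{k\},F)\big).$$ Then $g$ is non-negative, monotone nondecreasing, and submodular on $2^{\mathcal{K}_{g,user}}$; in particular the problem $\max_{F\subseteq\mathcal{K}_{g,user},|F|\leq l_f}g(F)$ is the maximization of a non-negative monotone submodular function under a cardinality constraint.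
   Context: For disjoint keyframe sets $\mathcal{K}_{loc}=\{r_1,\dots,r_L\}$ (ordered) and $\mathcal{K}_{fixed}$, $\tilde{\mathcal{I}}_{loc}(\mathcal{K}_{loc},\mathcal{K}_{fixed})=\tilde{\mathbf{L}}_{loc}\otimes\mathcal{I}$, where $\mathbf{L}_{loc}$ is the $L\times L$ matrix with $[\mathbf{L}_{loc}]_{i,j}=-\sum_{e\text{ between }r_i,r_j}w_e$ for $i\neq j$ and $[\mathbf{L}_{loc}]_{i,i}=\sum w_e$ over all edges joining $r_i$ to another node of $\mathcal{K}_{loc}\cup\mathcal{K}_{fixed}$, and $\tilde{\mathbf{L}}_{loc}$ is $\mathbf{L}_{loc}$ with its first row and column deleted; $\otimes$ is the Kronecker product. A set function $g$ is submodular if $g(L)+g(S)\geq g(L\cup S)+g(L\cap S)$ for all subsets $L,S$. *)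

theory Defs
  imports "Jordan_Normal_Form.Determinant"
begin

definition kron :: "real mat \<Rightarrow> real mat \<Rightarrow> real mat" where
  "kron A B = mat (dim_row A * dim_row B) (dim_col A * dim_col B)
     (\<lambda>(i,j). A $$ (i div dim_row B, j div dim_col B) * B $$ (i mod dim_row B, j mod dim_col B))"

(* L_loc for the ordered local set r 0, ..., r (n-1) and fixed set Kf;
   w x y = total weight of the edges between x and y (0 = no edge) *)
definition L_loc :: "('a \<Rightarrow> 'a \<Rightarrow> real) \<Rightarrow> nat \<Rightarrow> (nat \<Rightarrow> 'a) \<Rightarrow> 'a set \<Rightarrow> real mat" where
  "L_loc w n r Kf = mat n n (\<lambda>(i,j).
     if i = j then (\<Sum>y \<in> (r ` {0..<n} \<union> Kf) - {r i}. w (r i) y)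
     else - w (r i) (r j))"

definition I_loc_tilde :: "('a \<Rightarrow> 'a \<Rightarrow> real) \<Rightarrow> real mat \<Rightarrow> nat \<Rightarrow> (nat \<Rightarrow> 'a) \<Rightarrow> 'a set \<Rightarrow> real mat" where
  "I_loc_tilde w Info n r Kf = kron (mat_delete (L_loc w n r Kf) 0 0) Info"

definition sym_pos_def :: "nat \<Rightarrow> real mat \<Rightarrow> bool" where
  "sym_pos_def d M \<longleftrightarrow> M \<in> carrier_mat d d \<and> transpose_mat M = M \<and>
     (\<forall>v \<in> carrier_vec d. v \<noteq> 0\<^sub>v d \<longrightarrow> v \<bullet> (M *\<^sub>v v) > 0)"

definition connected_on :: "('a \<Rightarrow> 'a \<Rightarrow> real) \<Rightarrow> 'a set \<Rightarrow> bool" where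
  "connected_on w V \<longleftrightarrow> (\<forall>x\<in>V. \<forall>y\<in>V.
     (\<lambda>a b. a \<in> V \<and> b \<in> V \<and> w a b \<noteq> 0)\<^sup>*\<^sup>* x y)"

end

theory Submission
  imports Defs
begin

text \<open>Deleting the first keyframe from the Laplacian leaves a symmetric matrix \<open>Y\<close> with
  non-positive off-diagonal entries whose row sums are the weights to the deleted keyframe;
  fixing the keyframes \<open>F\<close> only adds their weights to the diagonal. As
  \<open>det (A \<otimes> I) = det A ^ 6 * det I ^ (L - 1)\<close>, \<open>g F\<close> is \<open>6 log det (Y + D\<^sub>F)\<close> plus a
  non-negative constant. Expanding \<open>det (Y + c e\<^sub>i e\<^sub>i\<^sup>T) = det Y + c det Y\<^sub>i\<^sub>i\<close> shows that
  determinants of such matrices are non-negative and grow with the diagonal; with connectivity and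
  weights \<open>\<ge> 1\<close> they are even \<open>\<ge> 1\<close>. For submodularity, raising the \<open>k\<close>-th diagonal entry by \<open>c\<close>
  multiplies the determinant by \<open>1 + c (Y\<^sup>-\<^sup>1)\<^sub>k\<^sub>k\<close>, and \<open>(Y\<^sup>-\<^sup>1)\<^sub>k\<^sub>k\<close> can only decrease when the
  diagonal of the positive semidefinite matrix \<open>Y\<close> grows.\<close>

section \<open>Determinants of Kronecker products\<close>

lemma kron_carrier: "kron A B \<in> carrier_mat (dim_row A * dim_row B) (dim_col A * dim_col B)"
  unfolding kron_def by auto

lemma kron_dims [simp]:
  "dim_row (kron A B) = dim_row A * dim_row B" "dim_col (kron A B) = dim_col A * dim_col B"
  unfolding kron_def by auto

lemma kron_one_Suc:
  assumes B: "B \<in> carrier_mat q q" and q: "0 < q"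
  shows "kron (1\<^sub>m (Suc p)) B = four_block_mat B (0\<^sub>m q (p*q)) (0\<^sub>m (p*q) q) (kron (1\<^sub>m p) B)"
proof (rule eq_matI)
  fix i j assume "i < dim_row (four_block_mat B (0\<^sub>m q (p*q)) (0\<^sub>m (p*q) q) (kron (1\<^sub>m p) B))"
    and "j < dim_col (four_block_mat B (0\<^sub>m q (p*q)) (0\<^sub>m (p*q) q) (kron (1\<^sub>m p) B))"
  hence i: "i < q + p*q" and j: "j < q + p*q" using B by auto
  have d: "i div q < Suc p" "j div q < Suc p" "q \<le> i \<Longrightarrow> (i - q) div q < p" "q \<le> j \<Longrightarrow> (j - q) div q < p"
    using i j by (auto simp: less_mult_imp_div_less)
  show "kron (1\<^sub>m (Suc p)) B $$ (i,j) = four_block_mat B (0\<^sub>m q (p*q)) (0\<^sub>m (p*q) q) (kron (1\<^sub>m p) B) $$ (i,j)"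
    using i j B q d
    by (auto simp: kron_def four_block_mat_def Let_def le_div_geq le_mod_geq div_eq_0_iff)
qed (use B in auto)

lemma det_kron_one_left:
  assumes B: "B \<in> carrier_mat q q"
  shows "det (kron (1\<^sub>m p) B) = det B ^ p"
proof (cases "q = 0")
  case True
  with B have "kron (1\<^sub>m p) B = 1\<^sub>m 0" "B = 1\<^sub>m 0" by auto
  then show ?thesis by simp
next
  case False
  then have q: "0 < q" by simp
  show ?thesis
  proof (induction p)
    case 0
    have "kron (1\<^sub>m 0) B = 1\<^sub>m 0" by (rule eq_matI) auto
    then show ?case by simp
  next
    case (Suc p)
    have "det (kron (1\<^sub>m (Suc p)) B) = det B * det (kron (1\<^sub>m p) B)"
      unfolding kron_one_Suc[OF B q] using B q
      by (intro det_four_block_mat_lower_left_zero) (auto simp: kron_carrier)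
    with Suc show ?case by simp
  qed
qed

lemma mat_mult_kron_one:
  assumes A: "A \<in> carrier_mat p p" and B: "B \<in> carrier_mat q q"
  shows "kron A (1\<^sub>m q) * kron (1\<^sub>m p) B = kron A B"
proof (rule eq_matI)
  fix i j assume "i < dim_row (kron A B)" and "j < dim_col (kron A B)"
  hence i: "i < p*q" and j: "j < p*q" using A B by auto
  hence q: "0 < q" by (cases q) auto
  have jd: "j div q < p" using j by (simp add: less_mult_imp_div_less)
  define k0 where "k0 = (j div q) * q + i mod q"
  have k0: "k0 < p * q"
  proof -
    have "k0 < (j div q + 1) * q" unfolding k0_def using q by simp
    also have "\<dots> \<le> p * q" using jd by (intro mult_right_mono) auto
    finally show ?thesis .
  qed
  have "(kron A (1\<^sub>m q) * kron (1\<^sub>m p) B) $$ (i,j) =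
     (\<Sum>k = 0..<p*q. kron A (1\<^sub>m q) $$ (i,k) * kron (1\<^sub>m p) B $$ (k,j))"
    using i j A B by (simp add: kron_def scalar_prod_def)
  also have "\<dots> = (\<Sum>k = 0..<p*q. if k = k0 then A $$ (i div q, j div q) * B $$ (i mod q, j mod q) else 0)"
  proof (rule sum.cong[OF refl])
    fix k assume k: "k \<in> {0..<p*q}"
    then have "k div q < p" by (simp add: less_mult_imp_div_less)
    moreover have "k = k0 \<longleftrightarrow> i mod q = k mod q \<and> k div q = j div q"
      unfolding k0_def using q by (metis div_mult_mod_eq mod_mult_self3 mod_mod_trivial
          div_mult_self3 mod_less_divisor div_less add_0 mult.commute add.commute)
    ultimately show "kron A (1\<^sub>m q) $$ (i,k) * kron (1\<^sub>m p) B $$ (k,j) =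
      (if k = k0 then A $$ (i div q, j div q) * B $$ (i mod q, j mod q) else 0)"
      using i j A B q jd k by (auto simp: kron_def)
  qed
  also have "\<dots> = kron A B $$ (i,j)" using i j k0 A B by (simp add: kron_def)
  finally show "(kron A (1\<^sub>m q) * kron (1\<^sub>m p) B) $$ (i,j) = kron A B $$ (i,j)" .
qed (use A B in auto)

lemma det_permute_rows_cols:
  assumes C: "C \<in> carrier_mat N N" and s: "s permutes {0..<N}"
  shows "det (mat N N (\<lambda>(i,j). C $$ (s i, s j))) = det C"
proof -
  define D where "D = mat N N (\<lambda>(i,j). C $$ (i, s j))"
  have D: "D \<in> carrier_mat N N" unfolding D_def by simp
  have sN: "\<And>i. i < N \<Longrightarrow> s i < N" using s permutes_in_image by fastforce
  have rows: "mat N N (\<lambda>(i,j). C $$ (s i, s j)) = mat N N (\<lambda>(i,j). D $$ (s i, j))"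
    by (rule eq_matI) (auto simp: D_def sN)
  have cols: "transpose_mat D = mat N N (\<lambda>(i,j). transpose_mat C $$ (s i, j))"
    by (rule eq_matI) (use C in \<open>auto simp: D_def sN\<close>)
  have "det D = of_int (sign s) * det C"
    using det_permute_rows[of "transpose_mat C" N s] C s
    by (simp add: det_transpose[OF D, symmetric] cols det_transpose)
  then show ?thesis
    unfolding rows by (subst det_permute_rows[OF D s]) (simp add: sign_def)
qed

definition kron_shuffle :: "nat \<Rightarrow> nat \<Rightarrow> nat \<Rightarrow> nat" where
  "kron_shuffle p q i = (if i < p * q then (i mod q) * p + i div q else i)"

lemma kron_shuffle_div_mod:
  assumes "i < p * q"
  shows "kron_shuffle p q i div p = i mod q" "kron_shuffle p q i mod p = i div q"
    "kron_shuffle p q i < q * p"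
proof -
  have q: "0 < q" using assms by (cases q) auto
  have d: "i div q < p" using assms by (simp add: less_mult_imp_div_less)
  then show "kron_shuffle p q i div p = i mod q" "kron_shuffle p q i mod p = i div q"
    using assms unfolding kron_shuffle_def by auto
  have "kron_shuffle p q i < (i mod q + 1) * p" using assms d unfolding kron_shuffle_def by simp
  also have "\<dots> \<le> q * p" using q by (intro mult_right_mono) (auto simp: Suc_le_eq)
  finally show "kron_shuffle p q i < q * p" .
qed

lemma kron_shuffle_permutes: "kron_shuffle p q permutes {0..<p*q}"
proof (rule bij_imp_permutes)
  have inj: "inj_on (kron_shuffle p q) {0..<p*q}"
  proof
    fix i j assume "i \<in> {0..<p*q}" "j \<in> {0..<p*q}" "kron_shuffle p q i = kron_shuffle p q j"
    then have "i mod q = j mod q" "i div q = j div q"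
      by (metis atLeastLessThan_iff kron_shuffle_div_mod(1), metis atLeastLessThan_iff kron_shuffle_div_mod(2))
    then show "i = j" by (metis div_mult_mod_eq)
  qed
  moreover have "kron_shuffle p q ` {0..<p*q} \<subseteq> {0..<p*q}"
    using kron_shuffle_div_mod(3) by (auto simp: mult.commute)
  ultimately show "bij_betw (kron_shuffle p q) {0..<p*q} {0..<p*q}"
    by (simp add: bij_betw_def endo_inj_surj)
qed (simp add: kron_shuffle_def)

lemma kron_commute_shuffle:
  assumes A: "A \<in> carrier_mat p p" and B: "B \<in> carrier_mat q q"
  shows "kron A B = mat (p*q) (p*q) (\<lambda>(i,j). kron B A $$ (kron_shuffle p q i, kron_shuffle p q j))"
proof (rule eq_matI)
  fix i j assume "i < dim_row (mat (p*q) (p*q) (\<lambda>(i,j). kron B A $$ (kron_shuffle p q i, kron_shuffle p q j)))"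
    "j < dim_col (mat (p*q) (p*q) (\<lambda>(i,j). kron B A $$ (kron_shuffle p q i, kron_shuffle p q j)))"
  then have ij: "i < p*q" "j < p*q" by auto
  then show "kron A B $$ (i,j) = mat (p*q) (p*q) (\<lambda>(i,j). kron B A $$ (kron_shuffle p q i, kron_shuffle p q j)) $$ (i,j)"
    using A B kron_shuffle_div_mod[OF ij(1)] kron_shuffle_div_mod[OF ij(2)] by (simp add: kron_def)
qed (use A B in auto)

lemma det_kron:
  assumes A: "A \<in> carrier_mat p p" and B: "B \<in> carrier_mat q q"
  shows "det (kron A B) = det A ^ q * det B ^ p"
proof -
  have "det (kron A (1\<^sub>m q)) = det (kron (1\<^sub>m q) A)"
    unfolding kron_commute_shuffle[OF A one_carrier_mat]
    by (rule det_permute_rows_cols[OF _ kron_shuffle_permutes]) (use A kron_carrier in \<open>auto simp: mult.commute\<close>)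
  also have "\<dots> = det A ^ q" by (rule det_kron_one_left[OF A])
  finally have "det (kron A (1\<^sub>m q)) = det A ^ q" .
  moreover have "det (kron A B) = det (kron A (1\<^sub>m q)) * det (kron (1\<^sub>m p) B)"
    unfolding mat_mult_kron_one[OF A B, symmetric]
    by (rule det_mult[of _ "p*q"]) (use A B kron_carrier in auto)
  ultimately show ?thesis by (simp add: det_kron_one_left[OF B])
qed

section \<open>Diagonal updates of diagonally dominant Z-matrices\<close>

definition add_diag :: "'a :: comm_monoid_add mat \<Rightarrow> (nat \<Rightarrow> 'a) \<Rightarrow> 'a mat" where
  "add_diag Y d = mat (dim_row Y) (dim_col Y) (\<lambda>(i,j). Y $$ (i,j) + (if i = j then d i else 0))"

definition row_sum :: "'a :: comm_monoid_add mat \<Rightarrow> nat \<Rightarrow> 'a" where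
  "row_sum Y i = (\<Sum>j = 0..<dim_col Y. Y $$ (i,j))"

lemma add_diag_dims [simp]: "dim_row (add_diag Y d) = dim_row Y" "dim_col (add_diag Y d) = dim_col Y"
  unfolding add_diag_def by auto

lemma add_diag_carrier [simp]: "add_diag Y d \<in> carrier_mat m n \<longleftrightarrow> Y \<in> carrier_mat m n"
  unfolding carrier_mat_def by simp

lemma add_diag_index [simp]: "i < dim_row Y \<Longrightarrow> j < dim_col Y \<Longrightarrow>
   add_diag Y d $$ (i,j) = Y $$ (i,j) + (if i = j then d i else 0)"
  unfolding add_diag_def by auto

lemma add_diag_add_diag: "add_diag (add_diag Y a) b = add_diag Y (\<lambda>i. a i + b i)"
  by (rule eq_matI) (auto simp: add.assoc)

lemma add_diag_cong:
  "Y \<in> carrier_mat m m \<Longrightarrow> (\<And>i. i < m \<Longrightarrow> a i = b i) \<Longrightarrow> add_diag Y a = add_diag Y b"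
  by (rule eq_matI) auto

lemma add_diag_zero [simp]: "add_diag Y (\<lambda>_. 0) = Y"
  by (rule eq_matI) auto

lemma add_diag_prefix_Suc:
  "add_diag Y (\<lambda>i. if i < Suc k then a i else 0)
     = add_diag (add_diag Y (\<lambda>i. if i < k then a i else 0)) (\<lambda>i. if i = k then a k else 0)"
  unfolding add_diag_add_diag by (intro arg_cong[where f = "add_diag Y"] ext) auto

lemma row_sum_add_diag:
  "Y \<in> carrier_mat m m \<Longrightarrow> i < m \<Longrightarrow> row_sum (add_diag Y d) i = row_sum Y i + d i"
  unfolding row_sum_def by (simp add: sum.distrib)

lemma delete_index_less: "x < Suc m \<Longrightarrow> x \<noteq> k \<Longrightarrow> k < Suc m \<Longrightarrow> delete_index k x < m"
  by (auto simp: delete_index_def)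

lemma insert_index_less: "a < m \<Longrightarrow> k < Suc m \<Longrightarrow> insert_index k a < Suc m"
  by (auto simp: insert_index_def)

lemma row_sum_mat_delete:
  fixes Y :: "'a :: ab_group_add mat"
  assumes Y: "Y \<in> carrier_mat (Suc m) (Suc m)" and k: "k < Suc m" and a: "a < m"
  shows "row_sum (mat_delete Y k k) a = row_sum Y (insert_index k a) - Y $$ (insert_index k a, k)"
proof -
  have "row_sum (mat_delete Y k k) a = (\<Sum>b = 0..<m. Y $$ (insert_index k a, insert_index k b))"
    unfolding row_sum_def using Y a k by (auto simp: mat_delete_index intro: sum.cong)
  also have "\<dots> = (\<Sum>c \<in> {0..<Suc m} - {k}. Y $$ (insert_index k a, c))"
    by (simp add: sum.reindex[OF insert_index_inj_on] insert_index_image[OF k, symmetric])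
  also have "\<dots> = row_sum Y (insert_index k a) - Y $$ (insert_index k a, k)"
    unfolding row_sum_def using Y k by (simp add: sum_diff1 del: sum.op_ivl_Suc)
  finally show ?thesis .
qed

lemma det_add_diag_single:
  fixes Y :: "'a :: comm_ring_1 mat"
  assumes Y: "Y \<in> carrier_mat m m" and i: "i < m"
  shows "det (add_diag Y (\<lambda>a. if a = i then c else 0)) = det Y + c * det (mat_delete Y i i)"
proof -
  let ?Y = "add_diag Y (\<lambda>a. if a = i then c else 0)"
  have cof: "cofactor ?Y i j = cofactor Y i j" for j
  proof -
    have "mat_delete ?Y i j = mat_delete Y i j"
      by (rule eq_matI) (use Y i in \<open>auto simp: mat_delete_def\<close>)
    then show ?thesis unfolding cofactor_def by simp
  qed
  have "det ?Y = (\<Sum>j<m. ?Y $$ (i,j) * cofactor ?Y i j)"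
    by (rule laplace_expansion_row) (use Y i in auto)
  also have "\<dots> = (\<Sum>j<m. Y $$ (i,j) * cofactor Y i j + (if j = i then c * cofactor Y i i else 0))"
    by (rule sum.cong) (use Y i in \<open>auto simp: cof algebra_simps\<close>)
  also have "\<dots> = det Y + c * cofactor Y i i"
    unfolding sum.distrib laplace_expansion_row[OF Y i, symmetric] using i by simp
  also have "cofactor Y i i = det (mat_delete Y i i)"
    unfolding cofactor_def by (simp flip: mult_2)
  finally show ?thesis .
qed

lemma det_eq_0_if_row_sums_0:
  fixes Y :: "'a :: field mat"
  assumes Y: "Y \<in> carrier_mat (Suc m) (Suc m)" and rows: "\<And>i. i < Suc m \<Longrightarrow> row_sum Y i = 0"
  shows "det Y = 0"
proof -
  let ?v = "vec (Suc m) (\<lambda>_. 1 :: 'a)"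
  have "Y *\<^sub>v ?v = 0\<^sub>v (Suc m)"
    using Y rows by (intro eq_vecI) (auto simp: row_sum_def scalar_prod_def)
  moreover have "?v \<noteq> 0\<^sub>v (Suc m)" by (metis index_vec index_zero_vec(1) zero_less_Suc zero_neq_one)
  ultimately show ?thesis using det_0_iff_vec_prod_zero_field[OF Y] vec_carrier by blast
qed

definition diag_dom_zmat :: "nat \<Rightarrow> real mat \<Rightarrow> bool" where
  "diag_dom_zmat m Y \<longleftrightarrow> Y \<in> carrier_mat m m \<and> (\<forall>i<m. \<forall>j<m. Y $$ (i,j) = Y $$ (j,i))
     \<and> (\<forall>i<m. \<forall>j<m. i \<noteq> j \<longrightarrow> Y $$ (i,j) \<le> 0) \<and> (\<forall>i<m. 0 \<le> row_sum Y i)"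

lemma diag_dom_zmat_carrier: "diag_dom_zmat m Y \<Longrightarrow> Y \<in> carrier_mat m m"
  unfolding diag_dom_zmat_def by simp

lemma diag_dom_zmat_add_diag:
  assumes Y: "diag_dom_zmat m Y" and d: "\<And>i. i < m \<Longrightarrow> 0 \<le> row_sum Y i + d i"
  shows "diag_dom_zmat m (add_diag Y d)"
  using Y d diag_dom_zmat_carrier[OF Y] unfolding diag_dom_zmat_def by (auto simp: row_sum_add_diag)

lemma diag_dom_zmat_mat_delete:
  assumes Y: "diag_dom_zmat (Suc m) Y" and k: "k < Suc m"
  shows "diag_dom_zmat m (mat_delete Y k k)"
proof -
  have C: "Y \<in> carrier_mat (Suc m) (Suc m)" using diag_dom_zmat_carrier[OF Y] .
  have idx: "insert_index k a < Suc m" if "a < m" for a using insert_index_less[OF that k] .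
  have "0 \<le> row_sum (mat_delete Y k k) a" if a: "a < m" for a
  proof -
    have "Y $$ (insert_index k a, k) \<le> 0" "0 \<le> row_sum Y (insert_index k a)"
      using Y idx[OF a] k unfolding diag_dom_zmat_def by auto
    then show ?thesis unfolding row_sum_mat_delete[OF C k a] by simp
  qed
  moreover have "mat_delete Y k k $$ (a,b) = Y $$ (insert_index k a, insert_index k b)"
    if "a < m" "b < m" for a b
    using mat_delete_index[OF C k k that] by simp
  moreover have "insert_index k a \<noteq> insert_index k b" if "a \<noteq> b" for a b
    using that inj_onD[OF insert_index_inj_on, of k a b] by blast
  ultimately show ?thesis
    using Y C idx mat_delete_carrier[OF C] unfolding diag_dom_zmat_def by auto
qed

lemma det_add_diag_mono_if_minors_nonneg:
  assumes Y: "diag_dom_zmat m Y" and a: "\<And>i. i < m \<Longrightarrow> 0 \<le> a i"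
    and minors: "\<And>Z. diag_dom_zmat (m - 1) Z \<Longrightarrow> 0 \<le> det Z"
  shows "det Y \<le> det (add_diag Y a)"
proof -
  have C: "Y \<in> carrier_mat m m" using diag_dom_zmat_carrier[OF Y] .
  have "k \<le> m \<Longrightarrow> det Y \<le> det (add_diag Y (\<lambda>i. if i < k then a i else 0))" for k
  proof (induction k)
    case (Suc k)
    let ?W = "add_diag Y (\<lambda>i. if i < k then a i else 0)"
    have k: "k < Suc (m - 1)" "k < m" using Suc.prems by auto
    have "diag_dom_zmat m ?W" by (rule diag_dom_zmat_add_diag[OF Y]) (use Y a in \<open>auto simp: diag_dom_zmat_def\<close>)
    then have "diag_dom_zmat (m - 1) (mat_delete ?W k k)"
      using diag_dom_zmat_mat_delete[of "m - 1"] k by simp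
    then have "0 \<le> a k * det (mat_delete ?W k k)" using minors a k by simp
    then show ?case
      using Suc det_add_diag_single[of ?W m k "a k"] C k unfolding add_diag_prefix_Suc by simp
  qed simp
  from this[of m] show ?thesis using add_diag_cong[OF C, of "\<lambda>i. if i < m then a i else 0" a] by simp
qed

text \<open>Subtracting all row sums gives a singular matrix of the same kind, and adding them back
  cannot decrease the determinant.\<close>
lemma diag_dom_zmat_det_nonneg: "diag_dom_zmat m Y \<Longrightarrow> 0 \<le> det Y"
proof (induction m arbitrary: Y)
  case 0
  then have "Y = 1\<^sub>m 0" using diag_dom_zmat_carrier[OF 0] by auto
  then show ?case by simp
next
  case (Suc m)
  let ?Y0 = "add_diag Y (\<lambda>i. - row_sum Y i)"
  have C: "Y \<in> carrier_mat (Suc m) (Suc m)" using diag_dom_zmat_carrier[OF Suc.prems] .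
  have Y0: "diag_dom_zmat (Suc m) ?Y0" by (rule diag_dom_zmat_add_diag[OF Suc.prems]) simp
  have "det ?Y0 = 0" by (rule det_eq_0_if_row_sums_0) (use C in \<open>auto simp: row_sum_add_diag\<close>)
  moreover have "det ?Y0 \<le> det (add_diag ?Y0 (row_sum Y))"
    by (rule det_add_diag_mono_if_minors_nonneg[OF Y0]) (use Suc.prems Suc.IH in \<open>auto simp: diag_dom_zmat_def\<close>)
  moreover have "add_diag ?Y0 (row_sum Y) = Y" unfolding add_diag_add_diag by (rule eq_matI) auto
  ultimately show ?case by simp
qed

lemma det_add_diag_mono:
  "diag_dom_zmat m Y \<Longrightarrow> (\<And>i. i < m \<Longrightarrow> 0 \<le> a i) \<Longrightarrow> det Y \<le> det (add_diag Y a)"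
  using det_add_diag_mono_if_minors_nonneg diag_dom_zmat_det_nonneg by blast

lemma diag_dom_zmat_quadratic_form_nonneg:
  assumes Y: "diag_dom_zmat m Y"
  shows "0 \<le> (\<Sum>i = 0..<m. \<Sum>j = 0..<m. Y $$ (i,j) * v i * v j)"
proof -
  have C: "Y \<in> carrier_mat m m" using diag_dom_zmat_carrier[OF Y] .
  \<comment> \<open>\<open>v\<^sup>T Y v = (\<Sum>i. row_sum Y i * v\<^sub>i\<^sup>2) - (\<Sum>i j. Y\<^sub>i\<^sub>j * (v\<^sub>i - v\<^sub>j)\<^sup>2) / 2\<close>\<close>
  define S where "S = (\<Sum>i = 0..<m. \<Sum>j = 0..<m. Y $$ (i,j) * (v i)\<^sup>2 / 2)"
  define T where "T = (\<Sum>i = 0..<m. \<Sum>j = 0..<m. Y $$ (i,j) * (v i - v j)\<^sup>2 / 2)"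
  have "(\<Sum>i = 0..<m. \<Sum>j = 0..<m. Y $$ (i,j) * v i * v j)
      = (\<Sum>i = 0..<m. \<Sum>j = 0..<m. Y $$ (i,j) * (v i)\<^sup>2 / 2 + Y $$ (i,j) * (v j)\<^sup>2 / 2
          - Y $$ (i,j) * (v i - v j)\<^sup>2 / 2)"
    by (intro sum.cong refl) (simp add: power2_eq_square field_simps)
  also have "\<dots> = S + S - T"
  proof -
    have "(\<Sum>i = 0..<m. \<Sum>j = 0..<m. Y $$ (i,j) * (v j)\<^sup>2 / 2) = S"
      unfolding S_def using Y by (subst sum.swap) (intro sum.cong refl, simp add: diag_dom_zmat_def)
    then show ?thesis unfolding S_def T_def by (simp only: sum.distrib sum_subtractf)
  qed
  finally have eq: "(\<Sum>i = 0..<m. \<Sum>j = 0..<m. Y $$ (i,j) * v i * v j) = S + S - T" .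
  have "S = (\<Sum>i = 0..<m. row_sum Y i * (v i)\<^sup>2 / 2)"
    unfolding S_def row_sum_def using C by (simp add: sum_distrib_right sum_divide_distrib)
  then have "0 \<le> S" using Y unfolding diag_dom_zmat_def by (auto intro: sum_nonneg)
  moreover have "T \<le> 0" unfolding T_def
  proof (intro sum_nonpos)
    fix i j assume "i \<in> {0..<m}" "j \<in> {0..<m}"
    then show "Y $$ (i,j) * (v i - v j)\<^sup>2 / 2 \<le> 0"
      using Y unfolding diag_dom_zmat_def by (cases "i = j") (auto simp: mult_nonpos_nonneg)
  qed
  ultimately show ?thesis unfolding eq by simp
qed

lemma sum_bilinear_symmetric:
  fixes Y :: "'a :: comm_semiring_0 mat"
  assumes "\<And>i j. i < m \<Longrightarrow> j < m \<Longrightarrow> Y $$ (i,j) = Y $$ (j,i)"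
  shows "(\<Sum>i = 0..<m. x i * (\<Sum>j = 0..<m. Y $$ (i,j) * y j))
       = (\<Sum>i = 0..<m. y i * (\<Sum>j = 0..<m. Y $$ (i,j) * x j))"
proof -
  have "x i * (Y $$ (i,j) * y j) = y j * (Y $$ (j,i) * x i)" if "i < m" "j < m" for i j
    using assms[OF that] by (simp add: mult_ac)
  then have "(\<Sum>i = 0..<m. x i * (\<Sum>j = 0..<m. Y $$ (i,j) * y j))
      = (\<Sum>i = 0..<m. \<Sum>j = 0..<m. y j * (Y $$ (j,i) * x i))"
    unfolding sum_distrib_left by (intro sum.cong refl) auto
  also have "\<dots> = (\<Sum>i = 0..<m. y i * (\<Sum>j = 0..<m. Y $$ (i,j) * x j))"
    by (subst sum.swap) (simp add: sum_distrib_left)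
  finally show ?thesis .
qed

lemma adj_mat_col_solves:
  fixes Z :: "'a :: field mat"
  assumes Z: "Z \<in> carrier_mat m m" and d: "det Z \<noteq> 0" and i: "i < m" and k: "k < m"
  shows "(\<Sum>j = 0..<m. Z $$ (i,j) * (adj_mat Z $$ (j,k) / det Z)) = (if i = k then 1 else 0)"
proof -
  have "(Z * adj_mat Z) $$ (i,k) = (det Z \<cdot>\<^sub>m 1\<^sub>m m) $$ (i,k)" using adj_mat(2)[OF Z] by simp
  then have "(\<Sum>j = 0..<m. Z $$ (i,j) * adj_mat Z $$ (j,k)) = det Z * (if i = k then 1 else 0)"
    using Z adj_mat(1)[OF Z] i k by (simp add: scalar_prod_def)
  then show ?thesis using d by (simp add: sum_divide_distrib[symmetric])
qed

lemma adj_mat_diag: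
  fixes Z :: "'a :: comm_ring_1 mat"
  shows "Z \<in> carrier_mat m m \<Longrightarrow> k < m \<Longrightarrow> adj_mat Z $$ (k,k) = det (mat_delete Z k k)"
  unfolding adj_mat_def cofactor_def by (simp flip: mult_2)

text \<open>If \<open>Y u = e\<^sub>k\<close> and \<open>(Y + B) u' = e\<^sub>k\<close> with \<open>B = diag b\<close>, then \<open>x = u - u'\<close> solves
  \<open>Y x = B u'\<close>, and \<open>u\<^sub>k - u'\<^sub>k = u\<^sup>T B u' = x\<^sup>T Y x + u'\<^sup>T B u' \<ge> 0\<close>.\<close>
lemma diag_dom_zmat_solution_antimono:
  assumes Y: "diag_dom_zmat m Y" and b: "\<And>i. 0 \<le> b i" and k: "k < m"
    and Yu: "\<And>i. i < m \<Longrightarrow> (\<Sum>j = 0..<m. Y $$ (i,j) * u j) = (if i = k then 1 else 0)"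
    and Yu': "\<And>i. i < m \<Longrightarrow> (\<Sum>j = 0..<m. Y $$ (i,j) * u' j) = (if i = k then 1 else 0) - b i * u' i"
  shows "u' k \<le> u k"
proof -
  have sym: "\<And>i j. i < m \<Longrightarrow> j < m \<Longrightarrow> Y $$ (i,j) = Y $$ (j,i)" using Y unfolding diag_dom_zmat_def by auto
  have "(\<Sum>i = 0..<m. u' i * (\<Sum>j = 0..<m. Y $$ (i,j) * u j)) = (\<Sum>i = 0..<m. if i = k then u' i else 0)"
    by (intro sum.cong) (simp_all add: Yu)
  then have "u' k = (\<Sum>i = 0..<m. u' i * (\<Sum>j = 0..<m. Y $$ (i,j) * u j))"
    using k by simp
  also have "\<dots> = (\<Sum>i = 0..<m. u i * (\<Sum>j = 0..<m. Y $$ (i,j) * u' j))"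
    by (rule sum_bilinear_symmetric[OF sym])
  also have "\<dots> = (\<Sum>i = 0..<m. (if i = k then u i else 0) - b i * u i * u' i)"
    by (intro sum.cong refl) (simp only: atLeastLessThan_iff Yu', simp add: algebra_simps)
  also have "\<dots> = u k - (\<Sum>i = 0..<m. b i * u i * u' i)"
    using k by (simp add: sum_subtractf)
  finally have uk: "u' k = u k - (\<Sum>i = 0..<m. b i * u i * u' i)" .
  define x where "x i = u i - u' i" for i
  have Yx: "(\<Sum>j = 0..<m. Y $$ (i,j) * x j) = b i * u' i" if "i < m" for i
    using Yu[OF that] Yu'[OF that] unfolding x_def by (simp add: right_diff_distrib sum_subtractf)
  have "0 \<le> (\<Sum>i = 0..<m. \<Sum>j = 0..<m. Y $$ (i,j) * x i * x j)"
    by (rule diag_dom_zmat_quadratic_form_nonneg[OF Y])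
  also have "\<dots> = (\<Sum>i = 0..<m. x i * (b i * u' i))"
    by (simp add: Yx sum_distrib_left mult_ac flip: Yx)
  finally have "0 \<le> (\<Sum>i = 0..<m. x i * (b i * u' i)) + (\<Sum>i = 0..<m. b i * (u' i)\<^sup>2)"
    using b by (simp add: sum_nonneg)
  also have "\<dots> = (\<Sum>i = 0..<m. b i * u i * u' i)"
    by (simp add: x_def power2_eq_square algebra_simps flip: sum.distrib)
  finally show "u' k \<le> u k" using uk by simp
qed

lemma det_minor_ratio_add_diag_antimono:
  assumes Y: "diag_dom_zmat m Y" and b: "\<And>i. 0 \<le> b i" and k: "k < m"
    and pos: "0 < det Y" "0 < det (add_diag Y b)"
  shows "det (mat_delete (add_diag Y b) k k) / det (add_diag Y b) \<le> det (mat_delete Y k k) / det Y"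
proof -
  let ?Y' = "add_diag Y b"
  have C: "Y \<in> carrier_mat m m" using diag_dom_zmat_carrier[OF Y] .
  then have C': "?Y' \<in> carrier_mat m m" by simp
  define u where "u j = adj_mat Y $$ (j,k) / det Y" for j
  define u' where "u' j = adj_mat ?Y' $$ (j,k) / det ?Y'" for j
  have "u' k \<le> u k"
  proof (rule diag_dom_zmat_solution_antimono[OF Y b k])
    fix i assume i: "i < m"
    show "(\<Sum>j = 0..<m. Y $$ (i,j) * u j) = (if i = k then 1 else 0)"
      unfolding u_def using adj_mat_col_solves[OF C _ i k] pos by simp
    have "(\<Sum>j = 0..<m. ?Y' $$ (i,j) * u' j)
        = (\<Sum>j = 0..<m. Y $$ (i,j) * u' j + (if j = i then b i * u' i else 0))"
      using C i by (intro sum.cong) (auto simp: algebra_simps)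
    also have "\<dots> = (\<Sum>j = 0..<m. Y $$ (i,j) * u' j) + b i * u' i"
      using i by (simp add: sum.distrib)
    finally show "(\<Sum>j = 0..<m. Y $$ (i,j) * u' j) = (if i = k then 1 else 0) - b i * u' i"
      unfolding u'_def using adj_mat_col_solves[OF C' _ i k] pos by simp
  qed
  then show ?thesis unfolding u_def u'_def adj_mat_diag[OF C k] adj_mat_diag[OF C' k] .
qed

section \<open>Grounded Z-matrices\<close>

definition mat_adjacent :: "'a :: zero mat \<Rightarrow> nat \<Rightarrow> nat \<Rightarrow> bool" where
  "mat_adjacent Y i j \<longleftrightarrow> i < dim_row Y \<and> j < dim_row Y \<and> i \<noteq> j \<and> Y $$ (i,j) \<noteq> 0"

text \<open>Reduced Laplacians of connected graphs with edge weights \<open>\<ge> 1\<close>, grounded at a vertex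
  adjacent to the rest, are of this form: the row sum of a vertex is its weight to the ground.\<close>
definition grounded_zmat :: "nat \<Rightarrow> real mat \<Rightarrow> bool" where
  "grounded_zmat m Y \<longleftrightarrow> diag_dom_zmat m Y
     \<and> (\<forall>i<m. \<forall>j<m. i \<noteq> j \<longrightarrow> Y $$ (i,j) \<noteq> 0 \<longrightarrow> Y $$ (i,j) \<le> -1)
     \<and> (\<forall>i<m. \<exists>z<m. (mat_adjacent Y)\<^sup>*\<^sup>* i z \<and> 1 \<le> row_sum Y z)"

lemma grounded_zmat_diag_dom_zmat: "grounded_zmat m Y \<Longrightarrow> diag_dom_zmat m Y"
  unfolding grounded_zmat_def by simp

lemma grounded_zmat_carrier: "grounded_zmat m Y \<Longrightarrow> Y \<in> carrier_mat m m"
  using grounded_zmat_diag_dom_zmat diag_dom_zmat_carrier by blast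

lemma grounded_zmat_add_diag:
  assumes Y: "grounded_zmat m Y" and d: "\<And>i. 0 \<le> d i"
  shows "grounded_zmat m (add_diag Y d)"
proof -
  have S: "diag_dom_zmat m Y" using Y unfolding grounded_zmat_def by simp
  have C: "Y \<in> carrier_mat m m" using diag_dom_zmat_carrier[OF S] .
  have off: "add_diag Y d $$ (i,j) = Y $$ (i,j)" if "i < m" "j < m" "i \<noteq> j" for i j
    using C that by simp
  have "mat_adjacent (add_diag Y d) = mat_adjacent Y"
    using C off by (intro ext) (auto simp: mat_adjacent_def)
  moreover have "row_sum Y i \<le> row_sum (add_diag Y d) i" if "i < m" for i
    using row_sum_add_diag[OF C that] d[of i] by simp
  moreover have "diag_dom_zmat m (add_diag Y d)"
    by (rule diag_dom_zmat_add_diag[OF S]) (use S d in \<open>auto simp: diag_dom_zmat_def\<close>)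
  ultimately show ?thesis
    using Y off unfolding grounded_zmat_def by (metis order_trans)
qed

lemma grounded_zmat_reach_mat_delete:
  assumes Y: "grounded_zmat (Suc m) Y" and k: "k < Suc m"
    and path: "(mat_adjacent Y)\<^sup>*\<^sup>* x t" and t: "1 \<le> row_sum Y t" and x: "x < Suc m" "x \<noteq> k"
  shows "\<exists>z<m. (mat_adjacent (mat_delete Y k k))\<^sup>*\<^sup>* (delete_index k x) z \<and> 1 \<le> row_sum (mat_delete Y k k) z"
proof -
  let ?D = "mat_delete Y k k"
  have S: "diag_dom_zmat (Suc m) Y" using grounded_zmat_diag_dom_zmat[OF Y] .
  have C: "Y \<in> carrier_mat (Suc m) (Suc m)" using diag_dom_zmat_carrier[OF S] .
  have grounded: "\<exists>z<m. (mat_adjacent ?D)\<^sup>*\<^sup>* (delete_index k x) z \<and> 1 \<le> row_sum ?D z"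
    if "x < Suc m" "x \<noteq> k" "1 \<le> row_sum Y x - Y $$ (x, k)" for x
  proof -
    have "1 \<le> row_sum ?D (delete_index k x)"
      using that row_sum_mat_delete[OF C k delete_index_less[OF that(1,2) k]] by (simp add: insert_delete_index)
    then show ?thesis using delete_index_less[OF that(1,2) k] by blast
  qed
  show ?thesis
    using path x
  proof (induction rule: converse_rtranclp_induct)
    case base
    have "Y $$ (t, k) \<le> 0" using S base k unfolding diag_dom_zmat_def by auto
    then show ?case using base t by (intro grounded) auto
    next
    case (step x y)
    then have y: "y < Suc m" "Y $$ (x,y) \<noteq> 0" "x \<noteq> y" using C by (auto simp: mat_adjacent_def)
    show ?case
    proof (cases "y = k")
      case True
      \<comment> \<open>grounding \<open>k\<close> moves the weight of the edge \<open>x k\<close> into the row sum of \<open>x\<close>\<close>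
      then have "Y $$ (x, k) \<le> -1" "0 \<le> row_sum Y x"
        using Y S y step.prems k unfolding grounded_zmat_def diag_dom_zmat_def by auto
      then show ?thesis using step.prems by (intro grounded) auto
    next
      case False
      let ?x = "delete_index k x" and ?y = "delete_index k y"
      have idx: "?x < m" "?y < m" "insert_index k ?x = x" "insert_index k ?y = y"
        using delete_index_less[OF _ _ k] insert_delete_index step.prems y(1) False by auto
      then have "?x \<noteq> ?y" using y(3) by metis
      then have "mat_adjacent ?D ?x ?y"
        using C y idx mat_delete_index[OF C k k idx(1,2)] unfolding mat_adjacent_def by simp
      then show ?thesis
        using step.IH[OF y(1) False] by (meson converse_rtranclp_into_rtranclp)
    qed
  qed
qed

lemma grounded_zmat_mat_delete:
  assumes Y: "grounded_zmat (Suc m) Y" and k: "k < Suc m"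
  shows "grounded_zmat m (mat_delete Y k k)"
proof -
  let ?D = "mat_delete Y k k"
  have S: "diag_dom_zmat (Suc m) Y" using grounded_zmat_diag_dom_zmat[OF Y] .
  have C: "Y \<in> carrier_mat (Suc m) (Suc m)" using diag_dom_zmat_carrier[OF S] .
  have "\<exists>z<m. (mat_adjacent ?D)\<^sup>*\<^sup>* a z \<and> 1 \<le> row_sum ?D z" if a: "a < m" for a
  proof -
    obtain t where "(mat_adjacent Y)\<^sup>*\<^sup>* (insert_index k a) t" "1 \<le> row_sum Y t"
      using Y insert_index_less[OF a k] unfolding grounded_zmat_def by blast
    from grounded_zmat_reach_mat_delete[OF Y k this insert_index_less[OF a k]] show ?thesis by simp
  qed
  moreover have "?D $$ (a,b) \<le> -1" if ab: "a < m" "b < m" "a \<noteq> b" "?D $$ (a,b) \<noteq> 0" for a b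
  proof -
    have "insert_index k a \<noteq> insert_index k b" using ab(3) by (auto simp: insert_index_def)
    moreover have "insert_index k a < Suc m" "insert_index k b < Suc m"
      using insert_index_less[OF ab(1) k] insert_index_less[OF ab(2) k] .
    moreover have "Y $$ (insert_index k a, insert_index k b) = ?D $$ (a,b)"
      using mat_delete_index[OF C k k ab(1,2)] .
    ultimately show ?thesis using Y ab(4) unfolding grounded_zmat_def by metis
  qed
  ultimately show ?thesis using diag_dom_zmat_mat_delete[OF S k] unfolding grounded_zmat_def by blast
qed

lemma grounded_zmat_det_ge_1: "grounded_zmat m Y \<Longrightarrow> 1 \<le> det Y"
proof (induction m arbitrary: Y)
  case 0
  then have "Y \<in> carrier_mat 0 0" using diag_dom_zmat_carrier unfolding grounded_zmat_def by blast
  then have "Y = 1\<^sub>m 0" by auto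
  then show ?case by simp
next
  case (Suc m)
  have S: "diag_dom_zmat (Suc m) Y" using Suc.prems unfolding grounded_zmat_def by simp
  have C: "Y \<in> carrier_mat (Suc m) (Suc m)" using diag_dom_zmat_carrier[OF S] .
  obtain z where z: "z < Suc m" "1 \<le> row_sum Y z" using Suc.prems unfolding grounded_zmat_def by blast
  let ?Y0 = "add_diag Y (\<lambda>a. if a = z then - row_sum Y z else 0)"
  have "diag_dom_zmat (Suc m) ?Y0" by (rule diag_dom_zmat_add_diag[OF S]) (use S in \<open>auto simp: diag_dom_zmat_def\<close>)
  then have "0 \<le> det ?Y0" by (rule diag_dom_zmat_det_nonneg)
  moreover have "1 \<le> det (mat_delete Y z z)"
    using Suc.IH grounded_zmat_mat_delete[OF Suc.prems z(1)] by simp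
  then have "1 \<le> row_sum Y z * det (mat_delete Y z z)" using z(2) by (metis mult_mono mult_1 zero_le_one order_trans)
  moreover have "det ?Y0 = det Y - row_sum Y z * det (mat_delete Y z z)"
    using det_add_diag_single[OF C z(1)] by simp
  ultimately show ?case by simp
qed

lemma grounded_zmat_det_pos: "grounded_zmat m Y \<Longrightarrow> 0 < det Y"
  using grounded_zmat_det_ge_1[of m Y] by simp

lemma det_add_diag_single_ratio:
  assumes Y: "grounded_zmat m Y" and k: "k < m"
  shows "det (add_diag Y (\<lambda>i. if i = k then c else 0)) / det Y = 1 + c * (det (mat_delete Y k k) / det Y)"
  using det_add_diag_single[OF grounded_zmat_carrier[OF Y] k] grounded_zmat_det_pos[OF Y]
  by (simp add: field_simps)

lemma det_add_diag_single_diminishing_returns: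
  assumes Y: "grounded_zmat m Y" and b: "\<And>i. 0 \<le> b i" and k: "k < m" and c: "0 \<le> c"
  shows "det (add_diag (add_diag Y b) (\<lambda>i. if i = k then c else 0)) / det (add_diag Y b)
       \<le> det (add_diag Y (\<lambda>i. if i = k then c else 0)) / det Y"
proof -
  have Yb: "grounded_zmat m (add_diag Y b)" by (rule grounded_zmat_add_diag[OF Y b])
  have "det (mat_delete (add_diag Y b) k k) / det (add_diag Y b) \<le> det (mat_delete Y k k) / det Y"
    using Y b k grounded_zmat_det_pos[OF Y] grounded_zmat_det_pos[OF Yb]
    by (intro det_minor_ratio_add_diag_antimono grounded_zmat_diag_dom_zmat)
  then have "c * (det (mat_delete (add_diag Y b) k k) / det (add_diag Y b)) \<le> c * (det (mat_delete Y k k) / det Y)"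
    using c by (rule mult_left_mono)
  then show ?thesis
    unfolding det_add_diag_single_ratio[OF Y k] det_add_diag_single_ratio[OF Yb k] by simp
qed

lemma det_add_diag_diminishing_returns:
  assumes Y: "grounded_zmat m Y" and a: "\<And>i. 0 \<le> a i" and b: "\<And>i. 0 \<le> b i"
  shows "det (add_diag (add_diag Y b) a) / det (add_diag Y b) \<le> det (add_diag Y a) / det Y"
proof -
  have C: "Y \<in> carrier_mat m m" using grounded_zmat_carrier[OF Y] .
  have Yb: "0 < det (add_diag Y b)" using grounded_zmat_det_pos[OF grounded_zmat_add_diag[OF Y b]] .
  let ?a = "\<lambda>k i. if i < k then a i else 0" and ?e = "\<lambda>k i. if i = k then a k else 0"
  have "k \<le> m \<Longrightarrow> det (add_diag (add_diag Y b) (?a k)) / det (add_diag Y b) \<le> det (add_diag Y (?a k)) / det Y"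
    for k
  proof (induction k)
    case 0
    show ?case using grounded_zmat_det_pos[OF Y] Yb by simp
  next
    case (Suc k)
    define W where "W = add_diag Y (?a k)"
    have W: "grounded_zmat m W" unfolding W_def by (rule grounded_zmat_add_diag[OF Y]) (simp add: a)
    have W': "grounded_zmat m (add_diag W b)" by (rule grounded_zmat_add_diag[OF W b])
    have W'_eq: "add_diag (add_diag Y b) (?a k) = add_diag W b"
      unfolding W_def add_diag_add_diag by (simp add: add.commute)
    have W'e: "grounded_zmat m (add_diag (add_diag W b) (?e k))"
      by (rule grounded_zmat_add_diag[OF W']) (simp add: a)
    have IH: "det (add_diag W b) / det (add_diag Y b) \<le> det W / det Y"
      using Suc W'_eq unfolding W_def by simp
    have "det (add_diag (add_diag W b) (?e k)) / det (add_diag Y b)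
        = det (add_diag W b) / det (add_diag Y b) * (det (add_diag (add_diag W b) (?e k)) / det (add_diag W b))"
      using grounded_zmat_det_pos[OF W'] by simp
    also have "\<dots> \<le> det W / det Y * (det (add_diag W (?e k)) / det W)"
      using Suc.prems grounded_zmat_det_pos[OF W] grounded_zmat_det_pos[OF Y]
        grounded_zmat_det_pos[OF W'] grounded_zmat_det_pos[OF W'e]
      by (intro mult_mono IH det_add_diag_single_diminishing_returns[OF W b]) (auto simp: a)
    also have "\<dots> = det (add_diag W (?e k)) / det Y" using grounded_zmat_det_pos[OF W] by simp
    finally show ?case unfolding add_diag_prefix_Suc W'_eq W_def .
  qed
  from this[of m] show ?thesis
    using add_diag_cong[OF C, of "?a m" a] add_diag_cong[of "add_diag Y b" m "?a m" a] C by simp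
qed

lemma add_diag_sum_union:
  assumes "finite S" "finite T" "S \<inter> T = {}"
  shows "add_diag Y (\<lambda>i. \<Sum>f\<in>S \<union> T. c i f)
       = add_diag (add_diag Y (\<lambda>i. \<Sum>f\<in>S. c i f)) (\<lambda>i. \<Sum>f\<in>T. c i f)"
  unfolding add_diag_add_diag using assms by (simp add: sum.union_disjoint)

lemma det_add_diag_sum_ge_1:
  assumes "grounded_zmat m Y" "\<And>i f. 0 \<le> c i f"
  shows "1 \<le> det (add_diag Y (\<lambda>i. \<Sum>f\<in>F. c i f))"
  using assms by (intro grounded_zmat_det_ge_1 grounded_zmat_add_diag) (auto intro: sum_nonneg)

lemma ln_det_add_diag_sum_nonneg:
  assumes "grounded_zmat m Y" "\<And>i f. 0 \<le> c i f"
  shows "0 \<le> ln (det (add_diag Y (\<lambda>i. \<Sum>f\<in>F. c i f)))"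
  using det_add_diag_sum_ge_1[where c = c, OF assms, of F] by simp

lemma ln_det_add_diag_sum_mono:
  assumes Y: "grounded_zmat m Y" and c: "\<And>i f. 0 \<le> c i f" and ST: "S \<subseteq> T" "finite T"
  shows "ln (det (add_diag Y (\<lambda>i. \<Sum>f\<in>S. c i f))) \<le> ln (det (add_diag Y (\<lambda>i. \<Sum>f\<in>T. c i f)))"
proof -
  let ?D = "\<lambda>F. add_diag Y (\<lambda>i. \<Sum>f\<in>F. c i f)"
  have DS: "grounded_zmat m (?D S)" by (rule grounded_zmat_add_diag[OF Y]) (simp add: c sum_nonneg)
  have "?D T = add_diag (?D S) (\<lambda>i. \<Sum>f\<in>T - S. c i f)"
    using add_diag_sum_union[of S "T - S" Y c] ST finite_subset[OF ST] by (simp add: Un_absorb1)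
  then have "det (?D S) \<le> det (?D T)"
    using det_add_diag_mono[OF grounded_zmat_diag_dom_zmat[OF DS]] c by (simp add: sum_nonneg)
  then show ?thesis using grounded_zmat_det_ge_1[OF DS] by simp
qed

lemma ln_det_add_diag_sum_submodular:
  assumes Y: "grounded_zmat m Y" and c: "\<And>i f. 0 \<le> c i f" and fin: "finite S" "finite T"
  shows "ln (det (add_diag Y (\<lambda>i. \<Sum>f\<in>S \<union> T. c i f))) + ln (det (add_diag Y (\<lambda>i. \<Sum>f\<in>S \<inter> T. c i f)))
       \<le> ln (det (add_diag Y (\<lambda>i. \<Sum>f\<in>S. c i f))) + ln (det (add_diag Y (\<lambda>i. \<Sum>f\<in>T. c i f)))"
proof -
  let ?D = "\<lambda>F. add_diag Y (\<lambda>i. \<Sum>f\<in>F. c i f)"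
  let ?s = "\<lambda>F i. \<Sum>f\<in>F. c i f"
  have s: "\<And>F i. 0 \<le> ?s F i" by (simp add: c sum_nonneg)
  have D: "grounded_zmat m (?D F)" for F by (rule grounded_zmat_add_diag[OF Y s])
  have pos: "0 < det (?D F)" for F using grounded_zmat_det_pos[OF D[of F]] .
  have "(S \<inter> T) \<union> (S - T) = S" "(S \<inter> T) \<union> (T - S) = T" "T \<union> (S - T) = S \<union> T" by auto
  then have DS: "?D S = add_diag (?D (S \<inter> T)) (?s (S - T))"
    and DT: "?D T = add_diag (?D (S \<inter> T)) (?s (T - S))"
    and DU: "?D (S \<union> T) = add_diag (?D T) (?s (S - T))"
    using add_diag_sum_union[of _ _ Y c] fin by (metis Int_Diff_disjoint finite_Diff finite_Int, 
        metis Int_Diff_disjoint finite_Diff finite_Int inf_commute, metis Diff_disjoint finite_Diff)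
  have "det (?D (S \<union> T)) / det (?D T) \<le> det (?D S) / det (?D (S \<inter> T))"
    unfolding DU DS DT by (rule det_add_diag_diminishing_returns[OF D s s])
  then have "det (?D (S \<union> T)) * det (?D (S \<inter> T)) \<le> det (?D S) * det (?D T)"
    using pos by (simp add: divide_simps)
  then have "ln (det (?D (S \<union> T)) * det (?D (S \<inter> T))) \<le> ln (det (?D S) * det (?D T))"
    using pos by simp
  moreover have "det (?D F) \<noteq> 0" for F using pos[of F] by simp
  ultimately show ?thesis by (simp add: ln_mult)
qed

section \<open>The reduced Laplacian\<close>

text \<open>Index \<open>a\<close> of \<open>mat_delete (L_loc w n r F) 0 0\<close> stands for the keyframe \<open>r (Suc a)\<close>; the
  deleted keyframe \<open>r 0\<close> plays the role of the ground.\<close>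

lemma L_loc_dims [simp]: "dim_row (L_loc w n r F) = n" "dim_col (L_loc w n r F) = n"
  unfolding L_loc_def by simp_all

lemma mat_delete_L_loc_index:
  assumes "a < n - 1" "b < n - 1"
  shows "mat_delete (L_loc w n r F) 0 0 $$ (a,b) =
    (if a = b then \<Sum>y \<in> (r ` {0..<n} \<union> F) - {r (Suc a)}. w (r (Suc a)) y
     else - w (r (Suc a)) (r (Suc b)))"
  using assms by (simp add: mat_delete_def L_loc_def)

lemma L_loc_reduced_add_diag:
  assumes "finite F" "F \<inter> r ` {0..<n} = {}"
  shows "mat_delete (L_loc w n r F) 0 0
       = add_diag (mat_delete (L_loc w n r {}) 0 0) (\<lambda>a. \<Sum>f\<in>F. w (r (Suc a)) f)"
proof (rule eq_matI)
  fix a b assume "a < dim_row (add_diag (mat_delete (L_loc w n r {}) 0 0) (\<lambda>a. \<Sum>f\<in>F. w (r (Suc a)) f))"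
    "b < dim_col (add_diag (mat_delete (L_loc w n r {}) 0 0) (\<lambda>a. \<Sum>f\<in>F. w (r (Suc a)) f))"
  then have ab: "a < n - 1" "b < n - 1" by simp_all
  then have "r (Suc a) \<in> r ` {0..<n}" by simp
  then have split: "(r ` {0..<n} \<union> F) - {r (Suc a)} = (r ` {0..<n} - {r (Suc a)}) \<union> F"
    using assms(2) by blast
  have "(\<Sum>y \<in> (r ` {0..<n} \<union> F) - {r (Suc a)}. w (r (Suc a)) y)
      = (\<Sum>y \<in> r ` {0..<n} - {r (Suc a)}. w (r (Suc a)) y) + (\<Sum>f\<in>F. w (r (Suc a)) f)"
    unfolding split by (rule sum.union_disjoint) (use assms in auto)
  then show "mat_delete (L_loc w n r F) 0 0 $$ (a,b)
      = add_diag (mat_delete (L_loc w n r {}) 0 0) (\<lambda>a. \<Sum>f\<in>F. w (r (Suc a)) f) $$ (a,b)"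
    using ab by (cases "a = b") (simp_all add: mat_delete_L_loc_index)
qed simp_all

lemma row_sum_L_loc_reduced:
  assumes r: "inj_on r {0..<n}" and a: "a < n - 1"
  shows "row_sum (mat_delete (L_loc w n r {}) 0 0) a = w (r (Suc a)) (r 0)"
proof -
  define x where "x = r (Suc a)"
  have n: "n = Suc (n - 1)" using a by simp
  have "(\<Sum>y \<in> r ` {0..<n} - {x}. w x y) = (\<Sum>j = 0..<n. w x (r j)) - w x x"
    using a r by (simp add: sum_diff1 sum.reindex x_def)
  also have "\<dots> = w x (r 0) + (\<Sum>b = 0..<n - 1. w x (r (Suc b))) - w x x"
    by (subst n) (simp add: sum.atLeast0_lessThan_Suc_shift del: sum.op_ivl_Suc)
  finally have diag: "(\<Sum>y \<in> r ` {0..<n} - {x}. w x y) = \<dots>" .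
  have "row_sum (mat_delete (L_loc w n r {}) 0 0) a
      = (\<Sum>b = 0..<n - 1. (if b = a then (\<Sum>y \<in> r ` {0..<n} - {x}. w x y) + w x x else 0) - w x (r (Suc b)))"
    unfolding row_sum_def using a by (intro sum.cong) (auto simp: mat_delete_L_loc_index x_def)
  also have "\<dots> = w x (r 0)" using a by (simp add: sum_subtractf diag)
  finally show ?thesis unfolding x_def .
qed

lemma L_loc_reduced_reaches_ground:
  assumes r: "inj_on r {0..<n}"
    and path: "(\<lambda>x y. x \<in> r ` {0..<n} \<and> y \<in> r ` {0..<n} \<and> w x y \<noteq> 0)\<^sup>*\<^sup>* (r (Suc i)) (r 0)"
    and i: "i < n - 1"
  shows "\<exists>z < n - 1. (mat_adjacent (mat_delete (L_loc w n r {}) 0 0))\<^sup>*\<^sup>* i z \<and> w (r (Suc z)) (r 0) \<noteq> 0"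
proof -
  let ?Y = "mat_delete (L_loc w n r {}) 0 0"
  have "x = r (Suc i) \<Longrightarrow> i < n - 1 \<Longrightarrow> \<exists>z < n - 1. (mat_adjacent ?Y)\<^sup>*\<^sup>* i z \<and> w (r (Suc z)) (r 0) \<noteq> 0"
    if "(\<lambda>x y. x \<in> r ` {0..<n} \<and> y \<in> r ` {0..<n} \<and> w x y \<noteq> 0)\<^sup>*\<^sup>* x (r 0)" for x
    using that
  proof (induction arbitrary: i rule: converse_rtranclp_induct)
    case base
    then have "Suc i < n" by simp
    then show ?case using inj_onD[OF r, of "Suc i" 0] base by simp
  next
    case (step x y)
    obtain j where j: "j < n" "y = r j" "w (r (Suc i)) (r j) \<noteq> 0"
      using step(1) step.prems(1) by auto
    show ?case
    proof (cases j)
      case 0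
      then show ?thesis using j step.prems by blast
    next
      case (Suc j')
      then have j': "j' < n - 1" using j by simp
      then obtain z where z: "z < n - 1" "(mat_adjacent ?Y)\<^sup>*\<^sup>* j' z" "w (r (Suc z)) (r 0) \<noteq> 0"
        using step.IH[of j'] j Suc by blast
      have "(mat_adjacent ?Y)\<^sup>*\<^sup>* i j'"
      proof (cases "i = j'")
        case False
        then have "mat_adjacent ?Y i j'"
          using j j' Suc step.prems by (simp add: mat_adjacent_def mat_delete_L_loc_index)
        then show ?thesis by blast
      qed simp
      then show ?thesis using z by (meson rtranclp_trans)
    qed
  qed
  from this[OF path refl i] show ?thesis .
qed

lemma L_loc_reduced_grounded:
  assumes order: "bij_betw r {0..<n} V" and n: "0 < n"
    and sym: "\<And>x y. w x y = w y x" and wt: "\<And>x y. w x y \<noteq> 0 \<Longrightarrow> 1 \<le> w x y"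
    and conn: "connected_on w V"
  shows "grounded_zmat (n - 1) (mat_delete (L_loc w n r {}) 0 0)"
proof -
  let ?Y = "mat_delete (L_loc w n r {}) 0 0"
  have r: "inj_on r {0..<n}" and V: "V = r ` {0..<n}" using order by (auto simp: bij_betw_def)
  have w: "0 \<le> w x y" for x y using wt[of x y] by (cases "w x y = 0") auto
  have rows: "row_sum ?Y i = w (r (Suc i)) (r 0)" if "i < n - 1" for i
    using row_sum_L_loc_reduced[OF r that] .
  have "diag_dom_zmat (n - 1) ?Y"
    unfolding diag_dom_zmat_def using w by (auto simp: mat_delete_L_loc_index rows sym)
  moreover have "\<exists>z < n - 1. (mat_adjacent ?Y)\<^sup>*\<^sup>* i z \<and> 1 \<le> row_sum ?Y z" if i: "i < n - 1" for i
  proof -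
    have "(\<lambda>x y. x \<in> V \<and> y \<in> V \<and> w x y \<noteq> 0)\<^sup>*\<^sup>* (r (Suc i)) (r 0)"
      using conn i n unfolding connected_on_def V by simp
    from L_loc_reduced_reaches_ground[OF r this[unfolded V] i] show ?thesis
      using rows wt by metis
  qed
  ultimately show ?thesis
    unfolding grounded_zmat_def using wt by (auto simp: mat_delete_L_loc_index)
qed

lemma ln_det_I_loc_tilde:
  assumes Y: "grounded_zmat (n - 1) (mat_delete (L_loc w n r {}) 0 0)" and w: "\<And>x y. 0 \<le> w x y"
    and Info: "Info \<in> carrier_mat q q" "0 < det Info"
    and F: "finite F" "F \<inter> r ` {0..<n} = {}"
  shows "ln (det (I_loc_tilde w Info n r F))
       = real q * ln (det (add_diag (mat_delete (L_loc w n r {}) 0 0) (\<lambda>i. \<Sum>f\<in>F. w (r (Suc i)) f)))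
         + real (n - 1) * ln (det Info)"
proof -
  let ?D = "add_diag (mat_delete (L_loc w n r {}) 0 0) (\<lambda>i. \<Sum>f\<in>F. w (r (Suc i)) f)"
  have "det (I_loc_tilde w Info n r F) = det ?D ^ q * det Info ^ (n - 1)"
    unfolding I_loc_tilde_def L_loc_reduced_add_diag[OF F]
    using Y Info(1) by (simp add: det_kron grounded_zmat_carrier)
  moreover have "0 < det ?D"
    using det_add_diag_sum_ge_1[where c = "\<lambda>i f. w (r (Suc i)) f", OF Y w, of F] by simp
  ultimately show ?thesis using Info(2) by (simp add: ln_mult ln_realpow)
qed

theorem lemma5:
  fixes Kloc Kg :: "'a set" and k :: 'a and w :: "'a \<Rightarrow> 'a \<Rightarrow> real"
    and Info :: "real mat" and n :: nat and r :: "nat \<Rightarrow> 'a"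
  assumes fin: "finite Kloc" "finite Kg"
    and disj: "k \<notin> Kloc" "k \<notin> Kg" "Kloc \<inter> Kg = {}"
    and sym: "\<And>x y. w x y = w y x"
    and wt: "\<And>x y. w x y \<noteq> 0 \<Longrightarrow> w x y \<ge> 1"
    and edges: "\<And>x y. w x y \<noteq> 0 \<Longrightarrow>
                   (x \<in> insert k Kloc \<and> y \<in> insert k Kloc \<union> Kg) \<or>
                   (y \<in> insert k Kloc \<and> x \<in> insert k Kloc \<union> Kg)"
    and conn: "connected_on w (insert k Kloc)"
    and Ipd: "sym_pos_def 6 Info" and Idet: "det Info \<ge> 1"
    and order: "bij_betw r {0..<n} (insert k Kloc)"
  defines "g \<equiv> \<lambda>F. ln (det (I_loc_tilde w Info n r F))"
  shows "(\<forall>F. F \<subseteq> Kg \<longrightarrow> g F \<ge> 0)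
       \<and> (\<forall>A B. A \<subseteq> B \<and> B \<subseteq> Kg \<longrightarrow> g A \<le> g B)
       \<and> (\<forall>A B. A \<subseteq> Kg \<and> B \<subseteq> Kg \<longrightarrow> g A + g B \<ge> g (A \<union> B) + g (A \<inter> B))"
proof -
  let ?Y = "mat_delete (L_loc w n r {}) 0 0"
  let ?h = "\<lambda>F. ln (det (add_diag ?Y (\<lambda>i. \<Sum>f\<in>F. w (r (Suc i)) f)))"
  have w: "0 \<le> w x y" for x y using wt[of x y] by (cases "w x y = 0") auto
  have R: "r ` {0..<n} = insert k Kloc" using order by (simp add: bij_betw_def)
  have Y: "grounded_zmat (n - 1) ?Y"
    using R by (intro L_loc_reduced_grounded[OF order _ sym wt conn]) (auto simp: bij_betw_def)
  have Info: "Info \<in> carrier_mat 6 6" "0 < det Info" "0 \<le> ln (det Info)"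
    using Ipd Idet by (auto simp: sym_pos_def_def)
  have fin_Kg: "finite F" if "F \<subseteq> Kg" for F using finite_subset[OF that fin(2)] .
  have g: "g F = 6 * ?h F + real (n - 1) * ln (det Info)" if "F \<subseteq> Kg" for F
  proof -
    have "F \<inter> r ` {0..<n} = {}" using that disj R by auto
    then show ?thesis
      using ln_det_I_loc_tilde[OF Y w Info(1,2) fin_Kg[OF that]] unfolding g_def by simp
  qed
  note h_nonneg = ln_det_add_diag_sum_nonneg[where c = "\<lambda>i f. w (r (Suc i)) f", OF Y w]
    and h_mono = ln_det_add_diag_sum_mono[where c = "\<lambda>i f. w (r (Suc i)) f", OF Y w]
    and h_submodular = ln_det_add_diag_sum_submodular[where c = "\<lambda>i f. w (r (Suc i)) f", OF Y w]
  show ?thesis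
  proof (intro conjI allI impI)
    fix F assume "F \<subseteq> Kg"
    then show "0 \<le> g F" using g h_nonneg Info(3) by simp
  next
    fix A B assume "A \<subseteq> B \<and> B \<subseteq> Kg"
    then show "g A \<le> g B" using g h_mono[of A B] fin_Kg by auto
  next
    fix A B assume AB: "A \<subseteq> Kg \<and> B \<subseteq> Kg"
    then have "A \<union> B \<subseteq> Kg" "A \<inter> B \<subseteq> Kg" by auto
    then show "g (A \<union> B) + g (A \<inter> B) \<le> g A + g B" using g AB h_submodular[of A B] fin_Kg by auto
  qed
qed

end
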